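(* Let $(\mathfrak g,\{e_1,\dots,e_n\})$ be a nice nilpotent Lie algebra with root matrix $M_\Delta\in\mathbb R^{m\times n}$ and structure constants $c_{ij}^k$, and let $b\in\mathbb R^m$ be a solution of $M_\Delta M_\Delta^{T} b=[1]$. Let $g=\sum_{i=1}^n g_i\, e^i\otimes e^i$ ($g_i\neq 0$) be a diagonal pseudo-Riemannian metric on $\mathfrak g$, let $\lambda\in\mathbb R$, and define $X\in\mathbb R^m$ by letting, for the row $h$ of $M_\Delta$ corresponding to $(\{i,j\},k)$ with $i<j$, $$X_h=\frac{g_k}{g_ig_j}\,(c_{ij}^k)^2 .$$ Then the following are equivalent: (1) $g$ is a nilsoliton with $\operatorname{Ric}=\lambda\,\mathrm{id}+D$ for some derivation $D$ of $\mathfrak g$; (2) $\operatorname{Ric}=\lambda(\mathrm{id}-N)$, where $N$ is the diagonal Nikolayevsky derivation; (3) $X\in -2\lambda b+\ker M_\Delta^{T}$.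
   Context: A nice Lie algebra is a Lie algebra $\mathfrak g$ with a basis $\{e_1,\dots,e_n\}$ (dual basis $\{e^1,\dots,e^n\}$) such that each bracket $[e_i,e_j]$ is a multiple of some $e_k$ and each $e_i\lrcorner\, de^j$ is a multiple of some $e^k$, where $d$ is the Chevalley–Eilenberg differential. Write $[e_i,e_j]=c_{ij}^k e_k$ for $i<j$. The root matrix $M_\Delta$ has one row for each triple $(\{i,j\},k)$ such that $[e_i,e_j]$ is a nonzero multiple of $e_k$; that row has $+1$ in position $k$, $-1$ in positions $i$ and $j$, and $0$ elsewhere; $m$ is the number of rows. $[1]$ denotes the vector with all entries $1$, and for $v\in\mathbb R^n$, $v^D$ denotes the diagonal matrix (in the basis $\{e_i\}$) with diagonal entries those of $v$. The diagonal Nikolayevsky derivation is $N=v^D$ with $v=M_\Delta^{T}b+[1]$, where $b$ is any solution of $M_\Delta M_\Delta^T b=[1]$. $\operatorname{Ric}$ denotes the Ricci operator of the left-invariant pseudo-Riemannian metric determined by $g$. A metric is a nilsoliton if $\operatorname{Ric}=\lambda\,\mathrm{id}+D$ with $\lambda\in\mathbb R$ and $D$ a derivation. *)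

theory Defs
  imports Main "HOL-Library.FuncSet" Complex_Main
begin

text \<open>A real Lie algebra of dimension n with basis e_0,...,e_(n-1)
 (indices 0..n-1 instead of 1..n) is given by structure constants
 c i j k = coefficient of e_k in [e_i,e_j]. Vectors are functions nat => real;
 only the components with index < n are meaningful.\<close>

type_synonym vec = "nat \<Rightarrow> real"
type_synonym sconst = "nat \<Rightarrow> nat \<Rightarrow> nat \<Rightarrow> real"

definition basis_vec :: "nat \<Rightarrow> vec" where
  "basis_vec a = (\<lambda>l. if l = a then 1 else 0)"

definition br :: "nat \<Rightarrow> sconst \<Rightarrow> vec \<Rightarrow> vec \<Rightarrow> vec" where
  "br n c x y = (\<lambda>k. \<Sum>i<n. \<Sum>j<n. x i * y j * c i j k)"

definition is_lie_algebra :: "nat \<Rightarrow> sconst \<Rightarrow> bool" where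
  "is_lie_algebra n c \<longleftrightarrow>
     (\<forall>i j k. c i j k \<noteq> 0 \<longrightarrow> i < n \<and> j < n \<and> k < n) \<and>
     (\<forall>i j k. c i j k = - c j i k) \<and>
     (\<forall>i<n. \<forall>j<n. \<forall>l<n. \<forall>k<n.
        (\<Sum>p<n. c j l p * c i p k + c l i p * c j p k + c i j p * c l p k) = 0)"

fun iter_br :: "nat \<Rightarrow> sconst \<Rightarrow> (nat \<Rightarrow> vec) \<Rightarrow> nat \<Rightarrow> vec" where
  "iter_br n c v 0 = v 0"
| "iter_br n c v (Suc p) = br n c (v (Suc p)) (iter_br n c v p)"

definition is_nilpotent :: "nat \<Rightarrow> sconst \<Rightarrow> bool" where
  "is_nilpotent n c \<longleftrightarrow> (\<exists>p. \<forall>v. \<forall>k<n. iter_br n c v p k = 0)"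

text \<open>Nice basis: each [e_i,e_j] is a multiple of some e_k, and each
 e_i \<lrcorner> de^k (= the 1-form x \<mapsto> -e^k([e_i,x]) = - sum_j c i j k x_j) is a
 multiple of some e^j.\<close>
definition is_nice :: "nat \<Rightarrow> sconst \<Rightarrow> bool" where
  "is_nice n c \<longleftrightarrow>
     (\<forall>i<n. \<forall>j<n. \<exists>k. \<forall>k'. c i j k' \<noteq> 0 \<longrightarrow> k' = k) \<and>
     (\<forall>i<n. \<forall>k<n. \<exists>j. \<forall>j'. c i j' k \<noteq> 0 \<longrightarrow> j' = j)"

text \<open>Rows of the root matrix, indexed by triples (i,j,k) with i<j
 (standing for ({i,j},k)) such that [e_i,e_j] is a nonzero multiple of e_k.\<close>
definition roots :: "nat \<Rightarrow> sconst \<Rightarrow> (nat \<times> nat \<times> nat) set" where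
  "roots n c = {(i,j,k). i < j \<and> j < n \<and> k < n \<and> c i j k \<noteq> 0}"

definition root_matrix :: "nat \<times> nat \<times> nat \<Rightarrow> nat \<Rightarrow> real" where
  "root_matrix h l = (case h of (i,j,k) \<Rightarrow>
     (if l = k then 1 else 0) - (if l = i then 1 else 0) - (if l = j then 1 else 0))"

definition MMt_eq_one :: "nat \<Rightarrow> sconst \<Rightarrow> (nat \<times> nat \<times> nat \<Rightarrow> real) \<Rightarrow> bool" where
  "MMt_eq_one n c b \<longleftrightarrow> (\<forall>h\<in>roots n c.
     (\<Sum>h'\<in>roots n c. (\<Sum>l<n. root_matrix h l * root_matrix h' l) * b h') = 1)"

definition in_ker_Mt :: "nat \<Rightarrow> sconst \<Rightarrow> (nat \<times> nat \<times> nat \<Rightarrow> real) \<Rightarrow> bool" where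
  "in_ker_Mt n c z \<longleftrightarrow> (\<forall>l<n. (\<Sum>h\<in>roots n c. root_matrix h l * z h) = 0)"

definition nik_diag :: "nat \<Rightarrow> sconst \<Rightarrow> (nat \<times> nat \<times> nat \<Rightarrow> real) \<Rightarrow> nat \<Rightarrow> real" where
  "nik_diag n c b l = (\<Sum>h\<in>roots n c. root_matrix h l * b h) + 1"

definition matvec :: "nat \<Rightarrow> (nat \<Rightarrow> nat \<Rightarrow> real) \<Rightarrow> vec \<Rightarrow> vec" where
  "matvec n D x = (\<lambda>k. \<Sum>l<n. D k l * x l)"

definition is_derivation :: "nat \<Rightarrow> sconst \<Rightarrow> (nat \<Rightarrow> nat \<Rightarrow> real) \<Rightarrow> bool" where
  "is_derivation n c D \<longleftrightarrow> (\<forall>x y. \<forall>k<n.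
     matvec n D (br n c x y) k = br n c (matvec n D x) y k + br n c x (matvec n D y) k)"

text \<open>Diagonal metric g = sum g_i e^i \<otimes> e^i, Levi-Civita connection via the
 Koszul formula, curvature R(x,y) = [\<nabla>_x,\<nabla>_y] - \<nabla>_[x,y], Ricci tensor
 ric(y,z) = tr(x \<mapsto> R(x,y)z), Ricci operator g(Ric y, z) = ric(y,z).\<close>
definition gform :: "nat \<Rightarrow> vec \<Rightarrow> vec \<Rightarrow> vec \<Rightarrow> real" where
  "gform n g x y = (\<Sum>i<n. g i * x i * y i)"

definition levi_civita :: "nat \<Rightarrow> sconst \<Rightarrow> vec \<Rightarrow> vec \<Rightarrow> vec \<Rightarrow> vec" where
  "levi_civita n c g x y = (\<lambda>k. if k < n then
     (gform n g (br n c x y) (basis_vec k) - gform n g (br n c y (basis_vec k)) x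
      + gform n g (br n c (basis_vec k) x) y) / (2 * g k) else 0)"

definition curv :: "nat \<Rightarrow> sconst \<Rightarrow> vec \<Rightarrow> vec \<Rightarrow> vec \<Rightarrow> vec \<Rightarrow> vec" where
  "curv n c g x y z = (\<lambda>k.
     levi_civita n c g x (levi_civita n c g y z) k
     - levi_civita n c g y (levi_civita n c g x z) k
     - levi_civita n c g (br n c x y) z k)"

definition ric :: "nat \<Rightarrow> sconst \<Rightarrow> vec \<Rightarrow> vec \<Rightarrow> vec \<Rightarrow> real" where
  "ric n c g y z = (\<Sum>a<n. curv n c g (basis_vec a) y z a)"

definition Ric :: "nat \<Rightarrow> sconst \<Rightarrow> vec \<Rightarrow> vec \<Rightarrow> vec" where
  "Ric n c g y = (\<lambda>k. if k < n then ric n c g y (basis_vec k) / g k else 0)"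

end

theory Submission
  imports Defs
begin

text \<open>On a nice nilpotent Lie algebra the brackets [e_x,e_a] \<in> \<real> e_p and [e_y,e_p] \<in> \<real> e_a
cannot both be nonzero: bracketing alternately with e_x and e_y would otherwise rescale e_a by a
nonzero factor forever. Together with niceness this kills every mixed term in the expansion of the
Ricci tensor of a diagonal metric through its Christoffel symbols, so Ric is diagonal with entries
(M^T X)_k / 2.

All three conditions then compare diagonal matrices. A diagonal matrix v^D is a derivation iff
M v = 0, and M N = 0 because M M^T b = [1] while M [1] = -[1]. Hence (1) says that
w = M^T X / 2 - \<lambda>(1 - N) = M^T (X / 2 + \<lambda> b) lies in ker M, and a vector in
ker M \<inter> im M^T vanishes, which is (2); condition (3) is the same equation
M^T X = -2\<lambda> M^T b.\<close>

section \<open>Coordinates and structure constants\<close>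

lemma is_lie_algebra_support:
  "is_lie_algebra n c \<Longrightarrow> c i j k \<noteq> 0 \<Longrightarrow> i < n \<and> j < n \<and> k < n"
  unfolding is_lie_algebra_def by blast

lemma is_lie_algebra_antisym: "is_lie_algebra n c \<Longrightarrow> c i j k = - c j i k"
  unfolding is_lie_algebra_def by blast

lemma sum_basis_vec_left: "a < n \<Longrightarrow> (\<Sum>i<n. basis_vec a i * f i) = (f a :: real)"
  unfolding basis_vec_def by (simp add: if_distrib[of "\<lambda>x. x * _"] cong: if_cong)

lemma sum_basis_vec_right: "a < n \<Longrightarrow> (\<Sum>i<n. f i * basis_vec a i) = (f a :: real)"
  unfolding basis_vec_def by (simp add: if_distrib[of "\<lambda>x. _ * x"] cong: if_cong)

lemma gform_basis_vec: "k < n \<Longrightarrow> gform n g u (basis_vec k) = g k * u k"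
  unfolding gform_def by (simp add: sum_basis_vec_right)

lemma br_basis_vec_left: "k < n \<Longrightarrow> br n c (basis_vec k) y = (\<lambda>i. \<Sum>j<n. y j * c k j i)"
  unfolding br_def
  by (simp add: mult.assoc sum_distrib_left[symmetric] sum_basis_vec_left)

lemma br_basis_vec_right: "k < n \<Longrightarrow> br n c y (basis_vec k) = (\<lambda>i. \<Sum>j<n. y j * c j k i)"
  unfolding br_def
  by (simp add: mult.assoc mult.left_commute[of "basis_vec k _"] sum_distrib_left[symmetric]
      sum_basis_vec_left)

lemma is_nice_bracket_target_unique:
  "is_nice n c \<Longrightarrow> i < n \<Longrightarrow> j < n \<Longrightarrow> k \<noteq> k' \<Longrightarrow> c i j k * c i j k' = 0"
  unfolding is_nice_def by (metis mult_eq_0_iff)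

lemma is_nice_bracket_source_unique:
  "is_nice n c \<Longrightarrow> i < n \<Longrightarrow> k < n \<Longrightarrow> j \<noteq> j' \<Longrightarrow> c i j k * c i j' k = 0"
  unfolding is_nice_def by (metis mult_eq_0_iff)

lemma iter_br_zero_mono:
  assumes zero: "\<And>v k. k < n \<Longrightarrow> iter_br n c v P k = 0" and "P \<le> Q" and "k < n"
  shows "iter_br n c v Q k = 0"
  using \<open>P \<le> Q\<close> \<open>k < n\<close>
proof (induction Q arbitrary: k rule: dec_induct)
  case base
  then show ?case by (rule zero)
next
  case (step Q)
  then show ?case by (simp add: br_def)
qed

lemma br_basis_vec_scaled:
  assumes "x < n" and "a < n" and "\<And>q. q \<noteq> p \<Longrightarrow> c x a q = 0"
  shows "br n c (basis_vec x) (\<lambda>i. s * basis_vec a i) = (\<lambda>i. s * c x a p * basis_vec p i)"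
proof
  fix i
  have "br n c (basis_vec x) (\<lambda>i. s * basis_vec a i) i = s * c x a i"
    using assms by (simp add: br_basis_vec_left mult.assoc mult.left_commute[of "basis_vec a _"]
        sum_distrib_left[symmetric] sum_basis_vec_left)
  also have "\<dots> = s * c x a p * basis_vec p i"
    using assms(3)[of i] by (cases "i = p") (auto simp: basis_vec_def)
  finally show "br n c (basis_vec x) (\<lambda>i. s * basis_vec a i) i = s * c x a p * basis_vec p i" .
qed

lemma nilpotent_nice_no_bracket_cycle:
  assumes lie: "is_lie_algebra n c" and nil: "is_nilpotent n c" and nice: "is_nice n c"
  shows "c x a p * c y p a = 0"
proof (rule ccontr)
  assume "c x a p * c y p a \<noteq> 0"
  then have xap: "c x a p \<noteq> 0" and ypa: "c y p a \<noteq> 0" by auto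
  then have bounds: "x < n" "a < n" "p < n" "y < n"
    using is_lie_algebra_support[OF lie] by blast+
  have x_step: "br n c (basis_vec x) (\<lambda>i. s * basis_vec a i)
      = (\<lambda>i. s * c x a p * basis_vec p i)" for s
  proof (rule br_basis_vec_scaled)
    show "c x a q = 0" if "q \<noteq> p" for q
      using is_nice_bracket_target_unique[OF nice, of x a p q] bounds xap that by auto
  qed (use bounds in auto)
  have y_step: "br n c (basis_vec y) (\<lambda>i. s * basis_vec p i)
      = (\<lambda>i. s * c y p a * basis_vec a i)" for s
  proof (rule br_basis_vec_scaled)
    show "c y p q = 0" if "q \<noteq> a" for q
      using is_nice_bracket_target_unique[OF nice, of y p a q] bounds ypa that by auto
  qed (use bounds in auto)
  define \<mu> where "\<mu> = c x a p * c y p a"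
  define v :: "nat \<Rightarrow> vec"
    where "v q = (if q = 0 then basis_vec a else if odd q then basis_vec x else basis_vec y)" for q
  have iter: "iter_br n c v (2 * m) = (\<lambda>i. \<mu> ^ m * basis_vec a i)" for m
  proof (induction m)
    case 0
    show ?case by (simp add: v_def)
  next
    case (Suc m)
    have "iter_br n c v (2 * Suc m)
        = br n c (basis_vec y) (br n c (basis_vec x) (\<lambda>i. \<mu> ^ m * basis_vec a i))"
      by (simp add: v_def Suc.IH)
    also have "\<dots> = br n c (basis_vec y) (\<lambda>i. (\<mu> ^ m * c x a p) * basis_vec p i)"
      by (simp only: x_step)
    also have "\<dots> = (\<lambda>i. \<mu> ^ Suc m * basis_vec a i)"
      by (simp only: y_step) (simp add: \<mu>_def mult_ac)
    finally show ?case .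
  qed
  obtain P where "\<And>v k. k < n \<Longrightarrow> iter_br n c v P k = 0"
    using nil unfolding is_nilpotent_def by blast
  then have "iter_br n c v (2 * P) a = 0"
    using iter_br_zero_mono[of n c P "2 * P"] bounds by simp
  moreover have "\<mu> \<noteq> 0" using xap ypa by (simp add: \<mu>_def)
  ultimately show False using iter[of P] by (simp add: basis_vec_def)
qed

lemma nilpotent_nice_ad_diag_zero:
  "is_lie_algebra n c \<Longrightarrow> is_nilpotent n c \<Longrightarrow> is_nice n c \<Longrightarrow> c j p p = 0"
  using nilpotent_nice_no_bracket_cycle[of n c j p p j] by simp

section \<open>The Ricci operator of a diagonal metric\<close>

definition christoffel :: "sconst \<Rightarrow> vec \<Rightarrow> nat \<Rightarrow> nat \<Rightarrow> nat \<Rightarrow> real" where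
  "christoffel c g i j k = (g k * c i j k - g i * c j k i + g j * c k i j) / (2 * g k)"

lemma levi_civita_eq_christoffel:
  assumes k: "k < n"
  shows "levi_civita n c g x y k = (\<Sum>i<n. \<Sum>j<n. x i * y j * christoffel c g i j k)"
proof -
  have "levi_civita n c g x y k =
    (g k * (\<Sum>i<n. \<Sum>j<n. x i * y j * c i j k) - (\<Sum>i<n. g i * (\<Sum>j<n. y j * c j k i) * x i)
     + (\<Sum>j<n. g j * (\<Sum>i<n. x i * c k i j) * y j)) / (2 * g k)"
    unfolding levi_civita_def using k
    by (simp add: gform_basis_vec br_basis_vec_right br_basis_vec_left, simp add: gform_def br_def)
  also have "\<dots> = (\<Sum>i<n. \<Sum>j<n. x i * y j * (g k * c i j k - g i * c j k i + g j * c k i j))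
      / (2 * g k)"
  proof -
    have "g k * (\<Sum>i<n. \<Sum>j<n. x i * y j * c i j k) = (\<Sum>i<n. \<Sum>j<n. x i * y j * (g k * c i j k))"
      by (simp add: sum_distrib_left mult_ac)
    moreover have "(\<Sum>i<n. g i * (\<Sum>j<n. y j * c j k i) * x i)
        = (\<Sum>i<n. \<Sum>j<n. x i * y j * (g i * c j k i))"
      by (simp add: sum_distrib_left sum_distrib_right mult_ac)
    moreover have "(\<Sum>j<n. g j * (\<Sum>i<n. x i * c k i j) * y j)
        = (\<Sum>i<n. \<Sum>j<n. x i * y j * (g j * c k i j))"
      by (subst sum.swap) (simp add: sum_distrib_left sum_distrib_right mult_ac)
    ultimately show ?thesis
      by (simp add: sum_subtractf[symmetric] sum.distrib[symmetric] algebra_simps)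
  qed
  finally show ?thesis
    by (simp add: christoffel_def sum_divide_distrib)
qed

lemma levi_civita_basis_vec_left:
  "a < n \<Longrightarrow> k < n \<Longrightarrow> levi_civita n c g (basis_vec a) y k = (\<Sum>j<n. y j * christoffel c g a j k)"
  by (simp add: levi_civita_eq_christoffel mult.assoc sum_distrib_left[symmetric]
      sum_basis_vec_left)

lemma levi_civita_basis_vec_right:
  "b < n \<Longrightarrow> k < n \<Longrightarrow> levi_civita n c g y (basis_vec b) k = (\<Sum>i<n. y i * christoffel c g i b k)"
  by (simp add: levi_civita_eq_christoffel mult.assoc mult.left_commute[of "basis_vec b _"]
      sum_distrib_left[symmetric] sum_basis_vec_left)

lemma christoffel_diag_zero:
  assumes "\<And>p. c j p p = 0" and "\<And>i j k. c i j k = - c j i k"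
  shows "christoffel c g a j a = 0"
  using assms(1)[of a] assms(2)[of a a j] assms(2)[of a j a] by (simp add: christoffel_def)

definition ric_term :: "sconst \<Rightarrow> vec \<Rightarrow> nat \<Rightarrow> nat \<Rightarrow> nat \<Rightarrow> nat \<Rightarrow> real" where
  "ric_term c g k l a p =
     christoffel c g a k p * christoffel c g l p a + c a l p * christoffel c g p k a"

lemma curv_basis_vec_diag:
  assumes ad_diag: "\<And>j p. c j p p = 0" and asym: "\<And>i j k. c i j k = - c j i k"
    and a: "a < n" and k: "k < n"
  shows "curv n c g (basis_vec a) y (basis_vec k) a = - (\<Sum>l<n. y l * (\<Sum>p<n. ric_term c g k l a p))"
proof -
  have "christoffel c g a j a = 0" for j
    by (rule christoffel_diag_zero[OF ad_diag asym])
  then have t1: "levi_civita n c g (basis_vec a) (levi_civita n c g y (basis_vec k)) a = 0"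
    using a by (simp add: levi_civita_basis_vec_left)
  have t2: "levi_civita n c g y (levi_civita n c g (basis_vec a) (basis_vec k)) a
      = (\<Sum>l<n. \<Sum>p<n. y l * (christoffel c g a k p * christoffel c g l p a))"
    unfolding levi_civita_eq_christoffel[OF a]
    by (intro sum.cong refl) (simp add: levi_civita_basis_vec_left a k sum_basis_vec_left)
  have "levi_civita n c g (br n c (basis_vec a) y) (basis_vec k) a
      = (\<Sum>p<n. \<Sum>l<n. y l * (c a l p * christoffel c g p k a))"
    unfolding levi_civita_basis_vec_right[OF k a] br_basis_vec_left[OF a]
    by (simp add: sum_distrib_right mult.assoc)
  then have t3: "levi_civita n c g (br n c (basis_vec a) y) (basis_vec k) a
      = (\<Sum>l<n. \<Sum>p<n. y l * (c a l p * christoffel c g p k a))"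
    by (subst (asm) sum.swap)
  show ?thesis
    unfolding curv_def t1 t2 t3 ric_term_def
    by (simp add: sum_distrib_left distrib_left sum.distrib)
qed

lemma ric_basis_vec_right:
  assumes lie: "is_lie_algebra n c" and ad_diag: "\<And>j p. c j p p = 0" and k: "k < n"
  shows "ric n c g y (basis_vec k) = - (\<Sum>l<n. y l * (\<Sum>a<n. \<Sum>p<n. ric_term c g k l a p))"
proof -
  have "ric n c g y (basis_vec k) = (\<Sum>a<n. - (\<Sum>l<n. y l * (\<Sum>p<n. ric_term c g k l a p)))"
    unfolding ric_def
    by (intro sum.cong refl curv_basis_vec_diag[OF ad_diag is_lie_algebra_antisym[OF lie] _ k]) simp
  also have "\<dots> = - (\<Sum>a<n. \<Sum>l<n. y l * (\<Sum>p<n. ric_term c g k l a p))"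
    by (simp only: sum_negf)
  also have "\<dots> = - (\<Sum>l<n. y l * (\<Sum>a<n. \<Sum>p<n. ric_term c g k l a p))"
    by (subst sum.swap) (simp only: sum_distrib_left)
  finally show ?thesis .
qed

definition bracket_weight :: "sconst \<Rightarrow> vec \<Rightarrow> nat \<Rightarrow> nat \<Rightarrow> nat \<Rightarrow> real" where
  "bracket_weight c g i j k = g k / (g i * g j) * (c i j k)\<^sup>2"

lemma ric_term_symmetrized:
  assumes asym: "\<And>i j k. c i j k = - c j i k" and "g a \<noteq> 0" and "g p \<noteq> 0"
  shows "ric_term c g k l a p + ric_term c g k l p a =
    (- (g k * g l * c p a k * c p a l)
     + (g p * c a k p - g a * c k p a) * (g p * c a l p - g a * c l p a)) / (2 * g a * g p)"
proof -
  have "c k a p = - c a k p" "c p k a = - c k p a" "c a p k = - c p a k"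
     "c p l a = - c l p a" "c a p l = - c p a l" "c l a p = - c a l p"
    by (rule asym)+
  then show ?thesis
    unfolding ric_term_def christoffel_def using assms(2,3) by (simp add: field_simps)
qed

lemma nilpotent_nice_ric_term_symmetrized:
  assumes lie: "is_lie_algebra n c" and nil: "is_nilpotent n c" and nice: "is_nice n c"
    and gnz: "\<forall>i<n. g i \<noteq> 0" and k: "k < n" and l: "l < n" and a: "a < n" and p: "p < n"
  shows "ric_term c g k l a p + ric_term c g k l p a =
    (if l = k
     then g k * (bracket_weight c g k a p + bracket_weight c g k p a - bracket_weight c g a p k) / 2
     else 0)"
proof -
  have asym: "\<And>i j k. c i j k = - c j i k" using is_lie_algebra_antisym[OF lie] .
  have ga: "g a \<noteq> 0" and gp: "g p \<noteq> 0" and gk: "g k \<noteq> 0" using gnz a p k by auto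
  note sym = ric_term_symmetrized[of c g a p k l, OF asym ga gp]
  have cycle: "c a k p * c l p a = 0"
    using nilpotent_nice_no_bracket_cycle[OF lie nil nice, of k a p l] asym[of a k p] by simp
  show ?thesis
  proof (cases "l = k")
    case True
    have "(g p * c a k p - g a * c k p a) * (g p * c a k p - g a * c k p a)
        = (g p * c a k p)\<^sup>2 + (g a * c k p a)\<^sup>2 - 2 * g p * g a * (c a k p * c k p a)"
      by (simp add: algebra_simps power2_eq_square)
    also have "c a k p * c k p a = 0" using cycle True by simp
    finally have "ric_term c g k k a p + ric_term c g k k p a
        = (- (g k * g k * c p a k * c p a k) + ((g p * c a k p)\<^sup>2 + (g a * c k p a)\<^sup>2))
          / (2 * g a * g p)"
      using sym unfolding True by simp
    also have "\<dots>
        = g k * (bracket_weight c g k a p + bracket_weight c g k p a - bracket_weight c g a p k) / 2"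
      using asym[of p a k] asym[of k a p] ga gp gk
      by (simp add: bracket_weight_def field_simps power2_eq_square)
    finally show ?thesis using True by simp
  next
    case False
    have cycle': "c k p a * c a l p = 0"
      using nilpotent_nice_no_bracket_cycle[OF lie nil nice, of l a p k] asym[of a l p] by auto
    have source: "c a k p * c a l p = 0" "c k p a * c l p a = 0"
      using is_nice_bracket_source_unique[OF nice a p, of k l]
        is_nice_bracket_source_unique[OF nice p a, of k l] asym[of k p a] asym[of l p a] False
      by auto
    have target: "c p a k * c p a l = 0"
      using is_nice_bracket_target_unique[OF nice p a, of k l] False by auto
    have "- (g k * g l * c p a k * c p a l)
        + (g p * c a k p - g a * c k p a) * (g p * c a l p - g a * c l p a)
      = - (g k * g l) * (c p a k * c p a l) + (g p)\<^sup>2 * (c a k p * c a l p)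
        - g p * g a * (c a k p * c l p a) - g a * g p * (c k p a * c a l p)
        + (g a)\<^sup>2 * (c k p a * c l p a)"
      by (simp add: algebra_simps power2_eq_square)
    then show ?thesis
      using sym False unfolding cycle cycle' source target by simp
  qed
qed

lemma sum_symmetrize:
  fixes f :: "'a \<Rightarrow> 'a \<Rightarrow> real"
  shows "(\<Sum>a\<in>A. \<Sum>p\<in>A. f a p) = (\<Sum>a\<in>A. \<Sum>p\<in>A. f a p + f p a) / 2"
  by (simp add: sum.distrib sum.swap[of "\<lambda>a p. f p a"])

lemma ric_basis_vec_nilpotent_nice:
  assumes lie: "is_lie_algebra n c" and nil: "is_nilpotent n c" and nice: "is_nice n c"
    and gnz: "\<forall>i<n. g i \<noteq> 0" and k: "k < n"
  shows "ric n c g y (basis_vec k) = g k * y k *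
    ((\<Sum>a<n. \<Sum>p<n. bracket_weight c g a p k) / 2 - (\<Sum>a<n. \<Sum>p<n. bracket_weight c g k a p)) / 2"
proof -
  define A where "A = (\<Sum>a<n. \<Sum>p<n. bracket_weight c g k a p)"
  define B where "B = (\<Sum>a<n. \<Sum>p<n. bracket_weight c g a p k)"
  have inner: "(\<Sum>a<n. \<Sum>p<n. ric_term c g k l a p) = (if l = k then g k * (2 * A - B) / 4 else 0)"
    if l: "l < n" for l
  proof -
    have "(\<Sum>a<n. \<Sum>p<n. ric_term c g k l a p) = (\<Sum>a<n. \<Sum>p<n. if l = k
        then g k * (bracket_weight c g k a p + bracket_weight c g k p a - bracket_weight c g a p k) / 2
        else 0) / 2"
      by (subst sum_symmetrize)
        (simp add: nilpotent_nice_ric_term_symmetrized[OF lie nil nice gnz k l])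
    also have "\<dots> = (if l = k then g k * (\<Sum>a<n. \<Sum>p<n.
        bracket_weight c g k a p + bracket_weight c g k p a - bracket_weight c g a p k) / 4 else 0)"
      by (simp add: sum_distrib_left sum_divide_distrib)
    also have "\<dots> = (if l = k then g k * (2 * A - B) / 4 else 0)"
      by (simp add: A_def B_def sum_subtractf sum.distrib
          sum.swap[of "\<lambda>a p. bracket_weight c g k p a"])
    finally show ?thesis .
  qed
  have "ric n c g y (basis_vec k) = - (\<Sum>l<n. y l * (if l = k then g k * (2 * A - B) / 4 else 0))"
    unfolding ric_basis_vec_right[OF lie nilpotent_nice_ad_diag_zero[OF lie nil nice] k]
    by (simp add: inner)
  also have "\<dots> = g k * y k * (B / 2 - A) / 2"
    using k by (simp add: if_distrib[of "\<lambda>x. _ * x"] cong: if_cong) (simp add: field_simps)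
  finally show ?thesis unfolding A_def B_def .
qed

lemma sum_roots_symmetric:
  fixes f :: "nat \<times> nat \<times> nat \<Rightarrow> real"
  assumes lie: "is_lie_algebra n c"
    and vanish: "\<And>i j k. c i j k = 0 \<Longrightarrow> f (i, j, k) = 0"
    and sym: "\<And>i j k. f (i, j, k) = f (j, i, k)"
  shows "(\<Sum>h\<in>roots n c. f h) = (\<Sum>i<n. \<Sum>j<n. \<Sum>k<n. f (i, j, k)) / 2"
proof -
  define F where "F i j = (\<Sum>k<n. f (i, j, k))" for i j
  have "(\<Sum>h\<in>roots n c. f h) = (\<Sum>h\<in>{..<n} \<times> {..<n} \<times> {..<n}. if fst h < fst (snd h) then f h else 0)"
    by (rule sum.mono_neutral_cong_left) (auto simp: roots_def vanish)
  also have "\<dots> = (\<Sum>i<n. \<Sum>jk\<in>{..<n} \<times> {..<n}. if i < fst jk then f (i, jk) else 0)"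
    unfolding sum.cartesian_product by (intro sum.cong refl) (auto split: prod.splits)
  also have "\<dots> = (\<Sum>i<n. \<Sum>j<n. \<Sum>k<n. if i < j then f (i, j, k) else 0)"
    unfolding sum.cartesian_product by (intro sum.cong refl) (auto split: prod.splits)
  also have "\<dots> = (\<Sum>i<n. \<Sum>j<n. if i < j then F i j else 0)"
    unfolding F_def by (intro sum.cong refl) simp
  finally have roots: "(\<Sum>h\<in>roots n c. f h) = (\<Sum>i<n. \<Sum>j<n. if i < j then F i j else 0)" .
  have F_swap: "F i j = F j i" for i j
    unfolding F_def using sym by simp
  have "F i i = 0" for i
    unfolding F_def using vanish is_lie_algebra_antisym[OF lie, of i i] by simp
  then have "(\<Sum>i<n. \<Sum>j<n. F i j)
      = (\<Sum>i<n. \<Sum>j<n. if i < j then F i j else 0) + (\<Sum>i<n. \<Sum>j<n. if j < i then F i j else 0)"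
    unfolding sum.distrib[symmetric] by (intro sum.cong refl) (auto simp: not_less_iff_gr_or_eq)
  also have "(\<Sum>i<n. \<Sum>j<n. if j < i then F i j else 0) = (\<Sum>i<n. \<Sum>j<n. if i < j then F i j else 0)"
    by (subst sum.swap) (intro sum.cong refl, metis F_swap)
  finally show ?thesis unfolding roots F_def by simp
qed

lemma bracket_weight_swap:
  "is_lie_algebra n c \<Longrightarrow> bracket_weight c g j i k = bracket_weight c g i j k"
  unfolding bracket_weight_def using is_lie_algebra_antisym[of n c i j k]
  by (simp add: mult.commute)

lemma root_matrix_transpose_bracket_weight:
  assumes lie: "is_lie_algebra n c" and k: "k < n"
  shows "(\<Sum>h\<in>roots n c. root_matrix h k * (\<lambda>(i, j, k). bracket_weight c g i j k) h)
    = (\<Sum>a<n. \<Sum>p<n. bracket_weight c g a p k) / 2 - (\<Sum>a<n. \<Sum>p<n. bracket_weight c g k a p)"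
proof -
  let ?w = "bracket_weight c g"
  define F where "F h = root_matrix h k * (\<lambda>(i, j, k). ?w i j k) h" for h
  have "(\<Sum>h\<in>roots n c. F h) = (\<Sum>i<n. \<Sum>j<n. \<Sum>k'<n. F (i, j, k')) / 2"
  proof (rule sum_roots_symmetric[OF lie])
    show "F (i, j, k') = 0" if "c i j k' = 0" for i j k'
      using that by (simp add: F_def bracket_weight_def)
    show "F (i, j, k') = F (j, i, k')" for i j k'
      by (auto simp: F_def root_matrix_def bracket_weight_swap[OF lie])
  qed
  then have "(\<Sum>h\<in>roots n c. root_matrix h k * (\<lambda>(i, j, k). ?w i j k) h)
      = (\<Sum>i<n. \<Sum>j<n. \<Sum>k'<n. root_matrix (i, j, k') k * ?w i j k') / 2"
    by (simp add: F_def)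
  also have "(\<Sum>i<n. \<Sum>j<n. \<Sum>k'<n. root_matrix (i, j, k') k * ?w i j k')
      = (\<Sum>i<n. \<Sum>j<n. \<Sum>k'<n. (if k' = k then ?w i j k' else 0)
          - (if i = k then ?w i j k' else 0) - (if j = k then ?w i j k' else 0))"
    by (intro sum.cong refl) (simp add: root_matrix_def algebra_simps)
  also have "\<dots> = (\<Sum>i<n. \<Sum>j<n. ?w i j k) - (\<Sum>j<n. \<Sum>k'<n. ?w k j k') - (\<Sum>i<n. \<Sum>k'<n. ?w i k k')"
  proof -
    have "(\<Sum>i<n. \<Sum>j<n. \<Sum>k'<n. if i = k then ?w i j k' else 0)
        = (\<Sum>i<n. if i = k then \<Sum>j<n. \<Sum>k'<n. ?w i j k' else 0)"
      by (intro sum.cong refl) simp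
    moreover have "(\<Sum>j<n. \<Sum>k'<n. if j = k then ?w i j k' else 0)
        = (\<Sum>j<n. if j = k then \<Sum>k'<n. ?w i j k' else 0)" for i
      by (intro sum.cong refl) simp
    ultimately show ?thesis
      using k by (simp add: sum_subtractf)
  qed
  also have "(\<Sum>i<n. \<Sum>k'<n. ?w i k k') = (\<Sum>j<n. \<Sum>k'<n. ?w k j k')"
    by (simp add: bracket_weight_swap[OF lie, of i k for i])
  finally show ?thesis by simp
qed

lemma Ric_nilpotent_nice:
  assumes lie: "is_lie_algebra n c" and nil: "is_nilpotent n c" and nice: "is_nice n c"
    and gnz: "\<forall>i<n. g i \<noteq> 0" and k: "k < n"
  shows "Ric n c g y k
    = (\<Sum>h\<in>roots n c. root_matrix h k * (\<lambda>(i, j, k). bracket_weight c g i j k) h) / 2 * y k"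
  using k gnz
  by (simp add: Ric_def ric_basis_vec_nilpotent_nice[OF lie nil nice gnz k]
      root_matrix_transpose_bracket_weight[OF lie k])

section \<open>Diagonal derivations and the root matrix\<close>

definition diag_mat :: "vec \<Rightarrow> nat \<Rightarrow> nat \<Rightarrow> real" where
  "diag_mat d k l = (if k = l then d k else 0)"

lemma matvec_diag_mat: "k < n \<Longrightarrow> matvec n (diag_mat d) y k = d k * y k"
  unfolding matvec_def diag_mat_def by (simp add: if_distrib[of "\<lambda>x. x * _"] cong: if_cong)

lemma is_derivation_cong:
  assumes "\<And>y k. k < n \<Longrightarrow> matvec n D y k = matvec n D' y k"
  shows "is_derivation n c D \<longleftrightarrow> is_derivation n c D'"
  unfolding is_derivation_def br_def using assms by simp

lemma is_derivation_diag_mat_iff: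
  "is_derivation n c (diag_mat d) \<longleftrightarrow> (\<forall>i<n. \<forall>j<n. \<forall>k<n. c i j k \<noteq> 0 \<longrightarrow> d k = d i + d j)"
proof -
  have defect: "matvec n (diag_mat d) (br n c x y) k - br n c (matvec n (diag_mat d) x) y k
      - br n c x (matvec n (diag_mat d) y) k
      = (\<Sum>i<n. \<Sum>j<n. (d k - d i - d j) * (x i * y j * c i j k))"
    if "k < n" for x y k
    using that
    by (simp add: matvec_diag_mat br_def sum_distrib_left sum_subtractf[symmetric] algebra_simps)
  have basis: "(\<Sum>i'<n. \<Sum>j'<n. (d k - d i' - d j') * (basis_vec i i' * basis_vec j j' * c i' j' k))
      = (d k - d i - d j) * c i j k" if "i < n" "j < n" for i j k
  proof -
    have "(\<Sum>i'<n. \<Sum>j'<n. (d k - d i' - d j') * (basis_vec i i' * basis_vec j j' * c i' j' k))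
        = (\<Sum>i'<n. basis_vec i i' * (\<Sum>j'<n. basis_vec j j' * ((d k - d i' - d j') * c i' j' k)))"
      by (simp add: sum_distrib_left mult_ac)
    then show ?thesis using that by (simp add: sum_basis_vec_left)
  qed
  show ?thesis
  proof
    assume der: "is_derivation n c (diag_mat d)"
    show "\<forall>i<n. \<forall>j<n. \<forall>k<n. c i j k \<noteq> 0 \<longrightarrow> d k = d i + d j"
    proof (intro allI impI)
      fix i j k assume "i < n" "j < n" "k < n" "c i j k \<noteq> 0"
      then have "(d k - d i - d j) * c i j k = 0"
        using der defect[of k "basis_vec i" "basis_vec j"] basis[of i j k]
        by (simp add: is_derivation_def)
      with \<open>c i j k \<noteq> 0\<close> show "d k = d i + d j" by simp
    qed
  next
    assume "\<forall>i<n. \<forall>j<n. \<forall>k<n. c i j k \<noteq> 0 \<longrightarrow> d k = d i + d j"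
    then have "(\<Sum>i<n. \<Sum>j<n. (d k - d i - d j) * (x i * y j * c i j k)) = 0" if "k < n" for x y k
      using that by (intro sum.neutral ballI) auto
    then show "is_derivation n c (diag_mat d)"
      unfolding is_derivation_def using defect by (simp add: algebra_simps)
  qed
qed

lemma root_matrix_apply:
  assumes "i < n" and "j < n" and "k < n"
  shows "(\<Sum>l<n. root_matrix (i, j, k) l * w l) = w k - w i - w j"
proof -
  have "(\<Sum>l<n. root_matrix (i, j, k) l * w l)
      = (\<Sum>l<n. if l = k then w l else 0) - (\<Sum>l<n. if l = i then w l else 0)
        - (\<Sum>l<n. if l = j then w l else 0)"
    unfolding root_matrix_def sum_subtractf[symmetric]
    by (intro sum.cong refl) (simp add: algebra_simps)
  then show ?thesis using assms by simp
qed

lemma is_derivation_diag_mat_iff_root_matrix: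
  assumes lie: "is_lie_algebra n c"
  shows "is_derivation n c (diag_mat d) \<longleftrightarrow> (\<forall>h\<in>roots n c. (\<Sum>l<n. root_matrix h l * d l) = 0)"
proof -
  have "(\<forall>i<n. \<forall>j<n. \<forall>k<n. c i j k \<noteq> 0 \<longrightarrow> d k = d i + d j) \<longleftrightarrow> (\<forall>(i, j, k)\<in>roots n c. d k = d i + d j)"
  proof
    assume roots_additive: "\<forall>(i, j, k)\<in>roots n c. d k = d i + d j"
    show "\<forall>i<n. \<forall>j<n. \<forall>k<n. c i j k \<noteq> 0 \<longrightarrow> d k = d i + d j"
    proof (intro allI impI)
      fix i j k assume "i < n" "j < n" "k < n" "c i j k \<noteq> 0"
      moreover have "c j i k \<noteq> 0" "i \<noteq> j"
        using \<open>c i j k \<noteq> 0\<close> is_lie_algebra_antisym[OF lie, of i j k]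
          is_lie_algebra_antisym[OF lie, of i i k]
        by auto
      ultimately show "d k = d i + d j"
        using roots_additive unfolding roots_def by (cases i j rule: linorder_cases) auto
    qed
  qed (auto simp: roots_def)
  also have "\<dots> \<longleftrightarrow> (\<forall>h\<in>roots n c. (\<Sum>l<n. root_matrix h l * d l) = 0)"
    by (intro ball_cong refl) (auto simp: roots_def root_matrix_apply)
  finally show ?thesis by (simp only: is_derivation_diag_mat_iff)
qed

lemma finite_roots: "finite (roots n c)"
  by (rule finite_subset[of _ "{..<n} \<times> {..<n} \<times> {..<n}"]) (auto simp: roots_def)

lemma ker_inter_range_transpose_zero:
  fixes M :: "'h \<Rightarrow> nat \<Rightarrow> real"
  assumes "finite H" and ker: "\<forall>h\<in>H. (\<Sum>l<n. M h l * (\<Sum>h'\<in>H. M h' l * s h')) = 0" and "l < n"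
  shows "(\<Sum>h\<in>H. M h l * s h) = 0"
proof -
  define w where "w l = (\<Sum>h\<in>H. M h l * s h)" for l
  have "(\<Sum>l<n. w l * w l) = (\<Sum>l<n. \<Sum>h\<in>H. w l * (M h l * s h))"
    by (intro sum.cong refl) (simp add: w_def sum_distrib_left)
  also have "\<dots> = (\<Sum>h\<in>H. \<Sum>l<n. w l * (M h l * s h))"
    by (rule sum.swap)
  also have "\<dots> = (\<Sum>h\<in>H. s h * (\<Sum>l<n. M h l * w l))"
    by (simp add: sum_distrib_left mult_ac)
  also have "\<dots> = 0" using ker by (simp add: w_def)
  finally have "(\<Sum>l<n. w l * w l) = 0" .
  then have "\<forall>l\<in>{..<n}. w l * w l = 0"
    by (subst sum_nonneg_eq_0_iff[symmetric]) auto
  then show ?thesis using \<open>l < n\<close> by (simp add: w_def)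
qed

lemma root_matrix_nik_diag:
  assumes bsol: "MMt_eq_one n c b" and h: "h \<in> roots n c"
  shows "(\<Sum>l<n. root_matrix h l * nik_diag n c b l) = 0"
proof -
  obtain i j k where ijk: "h = (i, j, k)" "i < n" "j < n" "k < n"
    using h unfolding roots_def by auto
  have "(\<Sum>l<n. root_matrix h l * (\<Sum>h'\<in>roots n c. root_matrix h' l * b h'))
      = (\<Sum>h'\<in>roots n c. (\<Sum>l<n. root_matrix h l * root_matrix h' l) * b h')"
    by (simp add: sum_distrib_left sum_distrib_right mult.assoc sum.swap[of _ "roots n c"])
  also have "\<dots> = 1" using bsol h unfolding MMt_eq_one_def by blast
  finally have "(\<Sum>l<n. root_matrix h l * (\<Sum>h'\<in>roots n c. root_matrix h' l * b h')) = 1" .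
  moreover have "(\<Sum>l<n. root_matrix h l * 1) = -1"
    using root_matrix_apply[of i n j k "\<lambda>_. 1"] ijk by simp
  ultimately show ?thesis
    unfolding nik_diag_def distrib_left sum.distrib by simp
qed

lemma diag_derivation_iff_nikolayevsky:
  assumes lie: "is_lie_algebra n c" and bsol: "MMt_eq_one n c b"
    and v: "\<And>l. v l = (\<Sum>h\<in>roots n c. root_matrix h l * Y h)"
  shows "is_derivation n c (diag_mat (\<lambda>l. v l - lam)) \<longleftrightarrow> (\<forall>l<n. v l = lam * (1 - nik_diag n c b l))"
proof -
  define w where "w l = v l - lam * (1 - nik_diag n c b l)" for l
  have w_range: "w l = (\<Sum>h\<in>roots n c. root_matrix h l * (Y h + lam * b h))" for l
    by (simp add: w_def v nik_diag_def algebra_simps sum.distrib sum_distrib_left)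
  have "(\<Sum>l<n. root_matrix h l * (v l - lam)) = (\<Sum>l<n. root_matrix h l * w l)"
    if "h \<in> roots n c" for h
    using root_matrix_nik_diag[OF bsol that]
    by (simp add: w_def algebra_simps sum.distrib sum_subtractf sum_distrib_left[symmetric])
  then have "is_derivation n c (diag_mat (\<lambda>l. v l - lam))
      \<longleftrightarrow> (\<forall>h\<in>roots n c. (\<Sum>l<n. root_matrix h l * w l) = 0)"
    by (simp add: is_derivation_diag_mat_iff_root_matrix[OF lie])
  also have "\<dots> \<longleftrightarrow> (\<forall>l<n. w l = 0)"
    using ker_inter_range_transpose_zero[OF finite_roots,
        where M = root_matrix and s = "\<lambda>h. Y h + lam * b h"]
    by (auto simp: w_range)
  finally show ?thesis by (simp add: w_def)
qed

lemma coset_ker_transpose_iff: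
  "(\<exists>z. in_ker_Mt n c z \<and> (\<forall>h\<in>roots n c. X h = a h + z h)) \<longleftrightarrow>
    (\<forall>l<n. (\<Sum>h\<in>roots n c. root_matrix h l * X h) = (\<Sum>h\<in>roots n c. root_matrix h l * a h))"
proof
  assume "\<exists>z. in_ker_Mt n c z \<and> (\<forall>h\<in>roots n c. X h = a h + z h)"
  then obtain z where "in_ker_Mt n c z" and "\<forall>h\<in>roots n c. X h = a h + z h" by blast
  then show "\<forall>l<n. (\<Sum>h\<in>roots n c. root_matrix h l * X h) = (\<Sum>h\<in>roots n c. root_matrix h l * a h)"
    by (simp add: in_ker_Mt_def distrib_left sum.distrib)
next
  assume "\<forall>l<n. (\<Sum>h\<in>roots n c. root_matrix h l * X h) = (\<Sum>h\<in>roots n c. root_matrix h l * a h)"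
  then have "in_ker_Mt n c (\<lambda>h. X h - a h)"
    by (simp add: in_ker_Mt_def right_diff_distrib sum_subtractf)
  then show "\<exists>z. in_ker_Mt n c z \<and> (\<forall>h\<in>roots n c. X h = a h + z h)" by force
qed

lemma coset_ker_transpose_iff_nik_diag:
  "(\<exists>z. in_ker_Mt n c z \<and> (\<forall>h\<in>roots n c. X h = - 2 * lam * b h + z h)) \<longleftrightarrow>
    (\<forall>l<n. (\<Sum>h\<in>roots n c. root_matrix h l * X h) / 2 = lam * (1 - nik_diag n c b l))"
proof -
  have "(\<Sum>h\<in>roots n c. root_matrix h l * (- 2 * lam * b h)) = lam * (1 - nik_diag n c b l) * 2"
    for l
    by (simp add: nik_diag_def sum_distrib_left sum_negf mult_ac)
  then show ?thesis unfolding coset_ker_transpose_iff by simp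
qed

lemma soliton_iff_diag_derivation:
  assumes R: "\<forall>y. \<forall>k<n. R y k = \<rho> k * y k"
  shows "(\<exists>D. is_derivation n c D \<and> (\<forall>y. \<forall>k<n. R y k = lam * y k + matvec n D y k))
    \<longleftrightarrow> is_derivation n c (diag_mat (\<lambda>k. \<rho> k - lam))"
proof
  assume "\<exists>D. is_derivation n c D \<and> (\<forall>y. \<forall>k<n. R y k = lam * y k + matvec n D y k)"
  then obtain D where "is_derivation n c D" and "\<forall>y. \<forall>k<n. R y k = lam * y k + matvec n D y k"
    by blast
  moreover have "matvec n D y k = matvec n (diag_mat (\<lambda>k. \<rho> k - lam)) y k"
    if "\<forall>y. \<forall>k<n. R y k = lam * y k + matvec n D y k" and "k < n" for y k
    using that(1)[rule_format, OF that(2), of y] R that(2)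
    by (simp add: matvec_diag_mat algebra_simps)
  ultimately show "is_derivation n c (diag_mat (\<lambda>k. \<rho> k - lam))"
    using is_derivation_cong by blast
next
  assume "is_derivation n c (diag_mat (\<lambda>k. \<rho> k - lam))"
  moreover have "\<forall>y. \<forall>k<n. R y k = lam * y k + matvec n (diag_mat (\<lambda>k. \<rho> k - lam)) y k"
    using R by (simp add: matvec_diag_mat algebra_simps)
  ultimately show "\<exists>D. is_derivation n c D \<and> (\<forall>y. \<forall>k<n. R y k = lam * y k + matvec n D y k)"
    by blast
qed

lemma diagonal_operator_eq_iff:
  fixes R :: "vec \<Rightarrow> vec" and \<rho> \<sigma> :: vec
  assumes R: "\<forall>y. \<forall>k<n. R y k = \<rho> k * y k"
  shows "(\<forall>y. \<forall>k<n. R y k = \<sigma> k * y k) \<longleftrightarrow> (\<forall>k<n. \<rho> k = \<sigma> k)"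
proof
  assume \<sigma>: "\<forall>y. \<forall>k<n. R y k = \<sigma> k * y k"
  show "\<forall>k<n. \<rho> k = \<sigma> k"
    using R[rule_format, where y = "\<lambda>_. 1"] \<sigma>[rule_format, where y = "\<lambda>_. 1"] by simp
qed (use R in simp)

theorem theorem1p5:
  fixes n :: nat and c :: sconst and g :: vec and lam :: real
    and b :: "nat \<times> nat \<times> nat \<Rightarrow> real"
  assumes lie: "is_lie_algebra n c"
    and nil: "is_nilpotent n c"
    and nice: "is_nice n c"
    and bsol: "MMt_eq_one n c b"
    and gnz: "\<forall>i<n. g i \<noteq> 0"
  defines "X \<equiv> (\<lambda>(i,j,k). g k / (g i * g j) * (c i j k)\<^sup>2)"
  shows "((\<exists>D. is_derivation n c D \<and>
             (\<forall>y. \<forall>k<n. Ric n c g y k = lam * y k + matvec n D y k))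
          \<longleftrightarrow> (\<forall>y. \<forall>k<n. Ric n c g y k = lam * (y k - nik_diag n c b k * y k)))
       \<and> ((\<forall>y. \<forall>k<n. Ric n c g y k = lam * (y k - nik_diag n c b k * y k))
          \<longleftrightarrow> (\<exists>z. in_ker_Mt n c z \<and>
                 (\<forall>h\<in>roots n c. X h = - 2 * lam * b h + z h)))"
proof -
  define \<rho> where "\<rho> l = (\<Sum>h\<in>roots n c. root_matrix h l * X h) / 2" for l
  have X_eq: "X = (\<lambda>(i, j, k). bracket_weight c g i j k)"
    unfolding X_def bracket_weight_def by simp
  have Ric: "\<forall>y. \<forall>k<n. Ric n c g y k = \<rho> k * y k"
    unfolding \<rho>_def X_eq using Ric_nilpotent_nice[OF lie nil nice gnz] by blast
  have \<rho>_range: "\<rho> l = (\<Sum>h\<in>roots n c. root_matrix h l * (X h / 2))" for l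
    unfolding \<rho>_def by (simp add: sum_divide_distrib)
  have soliton: "(\<exists>D. is_derivation n c D \<and> (\<forall>y. \<forall>k<n. Ric n c g y k = lam * y k + matvec n D y k))
      \<longleftrightarrow> (\<forall>k<n. \<rho> k = lam * (1 - nik_diag n c b k))"
    unfolding soliton_iff_diag_derivation[OF Ric]
      diag_derivation_iff_nikolayevsky[OF lie bsol \<rho>_range] ..
  have nikolayevsky: "(\<forall>y. \<forall>k<n. Ric n c g y k = lam * (y k - nik_diag n c b k * y k))
      \<longleftrightarrow> (\<forall>k<n. \<rho> k = lam * (1 - nik_diag n c b k))"
    using diagonal_operator_eq_iff[OF Ric, of "\<lambda>k. lam * (1 - nik_diag n c b k)"]
    by (simp add: algebra_simps)
  have coset: "(\<exists>z. in_ker_Mt n c z \<and> (\<forall>h\<in>roots n c. X h = - 2 * lam * b h + z h))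
      \<longleftrightarrow> (\<forall>k<n. \<rho> k = lam * (1 - nik_diag n c b k))"
    unfolding coset_ker_transpose_iff_nik_diag \<rho>_def ..
  show ?thesis using soliton nikolayevsky coset by blast
qed

end
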